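(* Let $H$ be a Hermitian operator on $\mathcal{H}=(\mathbb{C}^2)^{\otimes n}$ with eigenvalues $E_1\le E_2\le\cdots\le E_{2^n}$ (with multiplicity) and an orthonormal eigenbasis $|\varphi_1\rangle,\dots,|\varphi_{2^n}\rangle$, $H|\varphi_l\rangle=E_l|\varphi_l\rangle$. Let $E_g=E_1$, $|\Psi_g\rangle=|\varphi_1\rangle$, $\Delta=E_2-E_1$. Let $|\Psi_0\rangle$ be a normalised state with $p_g=|\langle\Psi_g|\Psi_0\rangle|^2>0$. For $\tau>0$ let $|\chi_\tau\rangle=e^{-\frac12(H-E_g)^2\tau^2}|\Psi_0\rangle$ and $E(\tau)=\langle\chi_\tau|H|\chi_\tau\rangle/\langle\chi_\tau|\chi_\tau\rangle$. Then $$E(\tau)-E_g\le\frac{1-p_g}{p_g}\,e^{-\tilde\Delta^2\tau^2}\,\tilde\Delta,\qquad \tilde\Delta=\max\{\Delta,(\sqrt2\,\tau)^{-1}\}.$$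
   Context: In the paper, $|\chi_\tau\rangle$ is (up to a positive scalar factor) the random-circuit variational state obtained from the Hamiltonian ansatz with a specific network configuration, and $E(\tau)$ is its energy. *)

theory Defs
  imports Complex_Main "Jordan_Normal_Form.Schur_Decomposition"
begin

definition mat_exp :: "complex mat \<Rightarrow> complex mat" where
  "mat_exp A = mat (dim_row A) (dim_col A)
     (\<lambda>(i, j). \<Sum>k. (A ^\<^sub>m k) $$ (i, j) / of_nat (fact k))"

text \<open>Dirac bracket  <u|v> = sum_i cnj(u_i) v_i.\<close>
definition braket :: "complex vec \<Rightarrow> complex vec \<Rightarrow> complex" where
  "braket u v = v \<bullet>c u"

end

theory Submission
  imports Defs
begin

text \<open>Expanding \<open>\<Psi>0 = \<Sum>\<^sub>l c\<^sub>l \<phi>\<^sub>l\<close> in the eigenbasis of \<open>H\<close>, the filtered state is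
  \<open>\<chi> = \<Sum>\<^sub>l exp (-\<tau>\<^sup>2 x\<^sub>l\<^sup>2 / 2) c\<^sub>l \<phi>\<^sub>l\<close> with \<open>x\<^sub>l = E\<^sub>l - E\<^sub>g\<close>, so \<open>E(\<tau>) - E\<^sub>g\<close> is the mean
  of the \<open>x\<^sub>l\<close> under the weights \<open>exp (-\<tau>\<^sup>2 x\<^sub>l\<^sup>2) |c\<^sub>l|\<^sup>2\<close>. The ground state contributes
  nothing to the numerator and at least \<open>p\<^sub>g\<close> to the denominator. Every excited state has
  \<open>x\<^sub>l \<ge> \<Delta>\<close>, and \<open>y exp (-\<tau>\<^sup>2 y\<^sup>2)\<close> is maximal at \<open>y = 1/(sqrt 2 \<tau>)\<close> and decreasing
  beyond, so for \<open>y \<ge> \<Delta>\<close> it is bounded by its value at \<open>\<Delta>t = max \<Delta> (1/(sqrt 2 \<tau>))\<close>;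
  the excited weights \<open>|c\<^sub>l|\<^sup>2\<close> sum to \<open>1 - p\<^sub>g\<close>.\<close>

lemma braket_sum:
  assumes "u \<in> carrier_vec N" "v \<in> carrier_vec N"
  shows "braket u v = (\<Sum>i<N. v $ i * cnj (u $ i))"
  using assms unfolding braket_def scalar_prod_def
  by (auto intro!: sum.cong simp: atLeast0LessThan)

lemma smult_mat_mult_vec:
  "v \<in> carrier_vec (dim_col B) \<Longrightarrow> (c \<cdot>\<^sub>m (B :: 'a :: comm_ring mat)) *\<^sub>v v = c \<cdot>\<^sub>v (B *\<^sub>v v)"
  by (rule eq_vecI) (auto simp: scalar_prod_def sum_distrib_left mult.assoc)

lemma power_mat_mult_vec_eigen:
  fixes M :: "'a :: field mat"
  assumes M: "M \<in> carrier_mat N N" and v: "v \<in> carrier_vec N" and eigen: "M *\<^sub>v v = d \<cdot>\<^sub>v v"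
  shows "(M ^\<^sub>m k) *\<^sub>v v = d ^ k \<cdot>\<^sub>v v"
proof (induction k)
  case 0
  then show ?case using M v by simp
next
  case (Suc k)
  have Mk: "M ^\<^sub>m k \<in> carrier_mat N N" using M by simp
  have "(M ^\<^sub>m Suc k) *\<^sub>v v = M ^\<^sub>m k *\<^sub>v (M *\<^sub>v v)" using assoc_mult_mat_vec[OF Mk M v] by simp
  also have "\<dots> = d \<cdot>\<^sub>v (M ^\<^sub>m k *\<^sub>v v)" using eigen mult_mat_vec[OF Mk v] by simp
  also have "\<dots> = d ^ Suc k \<cdot>\<^sub>v v" using Suc by (simp add: smult_smult_assoc mult.commute)
  finally show ?case .
qed

lemma gaussian_filter_eigen:
  fixes H :: "complex mat" and e c s :: real
  assumes H: "H \<in> carrier_mat N N" and v: "v \<in> carrier_vec N"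
    and eigen: "H *\<^sub>v v = complex_of_real e \<cdot>\<^sub>v v"
  defines "A \<equiv> H - complex_of_real c \<cdot>\<^sub>m 1\<^sub>m N"
  shows "(complex_of_real s \<cdot>\<^sub>m (A * A)) *\<^sub>v v = complex_of_real (s * (e - c)\<^sup>2) \<cdot>\<^sub>v v"
proof -
  have A: "A \<in> carrier_mat N N" unfolding A_def by (rule minus_carrier_mat) simp
  have eigen_A: "A *\<^sub>v v = complex_of_real (e - c) \<cdot>\<^sub>v v"
    unfolding A_def using H v eigen
    by (subst minus_mult_distrib_mat_vec[of _ N N]) (auto simp: smult_mat_mult_vec algebra_simps)
  have "(A * A) *\<^sub>v v = complex_of_real ((e - c)\<^sup>2) \<cdot>\<^sub>v v"
    using power_mat_mult_vec_eigen[OF A v eigen_A, of 2] A by (simp add: numeral_2_eq_2)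
  then show ?thesis using A v by (simp add: smult_mat_mult_vec smult_smult_assoc)
qed

lemma exp_series_mult_sums: "(\<lambda>k. (z :: complex) ^ k * c / of_nat (fact k)) sums (exp z * c)"
proof -
  have "(\<lambda>k. z ^ k /\<^sub>R fact k * c) sums (exp z * c)" by (rule sums_mult2[OF exp_converges])
  moreover have "z ^ k /\<^sub>R fact k * c = z ^ k * c / of_nat (fact k)" for k
    by (simp add: scaleR_conv_of_real field_simps)
  ultimately show ?thesis by simp
qed

locale orthonormal_basis =
  fixes N :: nat and \<phi> :: "nat \<Rightarrow> complex vec"
  assumes carrier: "\<forall>l < N. \<phi> l \<in> carrier_vec N"
    and orthonormal: "\<forall>l < N. \<forall>m < N. braket (\<phi> l) (\<phi> m) = (if l = m then 1 else 0)"
begin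

text \<open>Orthonormality says \<open>V * U = 1\<close> for the matrix \<open>U\<close> with columns \<open>\<phi> l\<close> and
  \<open>V = U\<^sup>*\<close>; completeness is the other identity \<open>U * V = 1\<close>.\<close>
lemma completeness:
  assumes i: "i < N" and j: "j < N"
  shows "(\<Sum>l<N. \<phi> l $ i * cnj (\<phi> l $ j)) = (if i = j then 1 else 0)"
proof -
  define U where "U = mat N N (\<lambda>(i, l). \<phi> l $ i)"
  define V where "V = mat N N (\<lambda>(l, j). cnj (\<phi> l $ j))"
  have U: "U \<in> carrier_mat N N" and V: "V \<in> carrier_mat N N" unfolding U_def V_def by auto
  have "V * U = 1\<^sub>m N"
  proof (rule eq_matI)
    fix l m assume l: "l < dim_row (1\<^sub>m N)" and m: "m < dim_col (1\<^sub>m N)"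
    have "(V * U) $$ (l, m) = (\<Sum>j<N. \<phi> m $ j * cnj (\<phi> l $ j))"
      using l m unfolding U_def V_def
      by (auto simp: scalar_prod_def atLeast0LessThan mult.commute intro!: sum.cong)
    also have "\<dots> = braket (\<phi> l) (\<phi> m)" using l m carrier by (subst braket_sum[of _ N]) auto
    finally show "(V * U) $$ (l, m) = 1\<^sub>m N $$ (l, m)" using l m orthonormal by simp
  qed (use U V in auto)
  then have "U * V = 1\<^sub>m N" using mat_mult_left_right_inverse[OF V U] by simp
  moreover have "(U * V) $$ (i, j) = (\<Sum>l<N. \<phi> l $ i * cnj (\<phi> l $ j))"
    using i j unfolding U_def V_def by (auto simp: scalar_prod_def atLeast0LessThan intro!: sum.cong)
  ultimately show ?thesis using i j by simp
qed

lemma vec_expansion: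
  assumes v: "v \<in> carrier_vec N" and i: "i < N"
  shows "v $ i = (\<Sum>l<N. braket (\<phi> l) v * \<phi> l $ i)"
proof -
  have "(\<Sum>l<N. braket (\<phi> l) v * \<phi> l $ i) = (\<Sum>l<N. \<Sum>j<N. v $ j * (\<phi> l $ i * cnj (\<phi> l $ j)))"
    using carrier v by (auto simp: braket_sum[of _ N] sum_distrib_left mult_ac intro!: sum.cong)
  also have "\<dots> = (\<Sum>j<N. v $ j * (\<Sum>l<N. \<phi> l $ i * cnj (\<phi> l $ j)))"
    by (subst sum.swap) (simp add: sum_distrib_left)
  also have "\<dots> = v $ i" using i by (simp add: completeness if_distrib cong: if_cong)
  finally show ?thesis by simp
qed

lemma mat_entry_expansion:
  assumes B: "B \<in> carrier_mat N N" and i: "i < N" and j: "j < N"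
  shows "B $$ (i, j) = (\<Sum>l<N. (B *\<^sub>v \<phi> l) $ i * cnj (\<phi> l $ j))"
proof -
  have "(\<Sum>l<N. (B *\<^sub>v \<phi> l) $ i * cnj (\<phi> l $ j))
      = (\<Sum>l<N. \<Sum>m<N. B $$ (i, m) * (\<phi> l $ m * cnj (\<phi> l $ j)))"
    using B i carrier
    by (auto simp: scalar_prod_def atLeast0LessThan sum_distrib_left sum_distrib_right mult_ac
        intro!: sum.cong)
  also have "\<dots> = (\<Sum>m<N. B $$ (i, m) * (\<Sum>l<N. \<phi> l $ m * cnj (\<phi> l $ j)))"
    by (subst sum.swap) (simp add: sum_distrib_left)
  also have "\<dots> = B $$ (i, j)" using j by (simp add: completeness if_distrib cong: if_cong)
  finally show ?thesis by simp
qed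

lemma mat_mult_vec_expansion_eigen:
  assumes B: "B \<in> carrier_mat N N" and eigen: "\<forall>l<N. B *\<^sub>v \<phi> l = e l \<cdot>\<^sub>v \<phi> l"
    and w: "w \<in> carrier_vec N" and w_exp: "\<forall>i<N. w $ i = (\<Sum>l<N. a l * \<phi> l $ i)"
    and i: "i < N"
  shows "(B *\<^sub>v w) $ i = (\<Sum>l<N. (a l * e l) * \<phi> l $ i)"
proof -
  have "(B *\<^sub>v w) $ i = (\<Sum>m<N. B $$ (i, m) * (\<Sum>l<N. a l * \<phi> l $ m))"
    using B w i w_exp by (auto simp: scalar_prod_def atLeast0LessThan intro!: sum.cong)
  also have "\<dots> = (\<Sum>l<N. a l * (\<Sum>m<N. B $$ (i, m) * \<phi> l $ m))"
    by (simp add: sum_distrib_left sum_distrib_right mult_ac) (subst sum.swap, simp)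
  also have "\<dots> = (\<Sum>l<N. a l * (B *\<^sub>v \<phi> l) $ i)"
    using B carrier i by (auto simp: scalar_prod_def atLeast0LessThan intro!: sum.cong)
  also have "\<dots> = (\<Sum>l<N. (a l * e l) * \<phi> l $ i)"
    using eigen carrier i by (auto intro!: sum.cong)
  finally show ?thesis .
qed

lemma braket_expansion:
  assumes u: "u \<in> carrier_vec N" and w: "w \<in> carrier_vec N"
    and u_exp: "\<forall>i<N. u $ i = (\<Sum>l<N. a l * \<phi> l $ i)"
    and w_exp: "\<forall>i<N. w $ i = (\<Sum>l<N. b l * \<phi> l $ i)"
  shows "braket u w = (\<Sum>l<N. b l * cnj (a l))"
proof -
  have "braket u w = (\<Sum>i<N. (\<Sum>l<N. b l * \<phi> l $ i) * (\<Sum>m<N. cnj (a m) * cnj (\<phi> m $ i)))"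
    using u w u_exp w_exp by (auto simp: braket_sum[of _ N] intro!: sum.cong)
  also have "\<dots> = (\<Sum>i<N. \<Sum>m<N. \<Sum>l<N. b l * (cnj (a m) * (\<phi> l $ i * cnj (\<phi> m $ i))))"
    by (simp add: sum_distrib_left sum_distrib_right mult_ac)
  also have "\<dots> = (\<Sum>m<N. \<Sum>i<N. \<Sum>l<N. b l * (cnj (a m) * (\<phi> l $ i * cnj (\<phi> m $ i))))"
    by (rule sum.swap)
  also have "\<dots> = (\<Sum>m<N. \<Sum>l<N. \<Sum>i<N. b l * (cnj (a m) * (\<phi> l $ i * cnj (\<phi> m $ i))))"
    by (rule sum.cong[OF refl], rule sum.swap)
  also have "\<dots> = (\<Sum>l<N. \<Sum>m<N. \<Sum>i<N. b l * (cnj (a m) * (\<phi> l $ i * cnj (\<phi> m $ i))))"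
    by (rule sum.swap)
  also have "\<dots> = (\<Sum>l<N. \<Sum>m<N. b l * cnj (a m) * (\<Sum>i<N. \<phi> l $ i * cnj (\<phi> m $ i)))"
    by (simp add: sum_distrib_left mult_ac)
  also have "\<dots> = (\<Sum>l<N. \<Sum>m<N. b l * cnj (a m) * (if m = l then 1 else 0))"
    using carrier orthonormal by (auto simp: braket_sum[of _ N, symmetric] intro!: sum.cong)
  also have "\<dots> = (\<Sum>l<N. b l * cnj (a l))"
    by (simp add: if_distrib cong: if_cong)
  finally show ?thesis .
qed

lemma braket_self_expansion:
  assumes v: "v \<in> carrier_vec N"
  shows "braket v v = complex_of_real (\<Sum>l<N. (cmod (braket (\<phi> l) v))\<^sup>2)"
proof -
  have "braket v v = (\<Sum>l<N. braket (\<phi> l) v * cnj (braket (\<phi> l) v))"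
    using braket_expansion[OF v v] vec_expansion[OF v] by simp
  then show ?thesis by (simp only: of_real_sum complex_norm_square)
qed

lemma mat_exp_entry_eigen:
  assumes M: "M \<in> carrier_mat N N" and eigen: "\<forall>l<N. M *\<^sub>v \<phi> l = d l \<cdot>\<^sub>v \<phi> l"
    and i: "i < N" and j: "j < N"
  shows "mat_exp M $$ (i, j) = (\<Sum>l<N. exp (d l) * (\<phi> l $ i * cnj (\<phi> l $ j)))"
proof -
  have power_entry: "(M ^\<^sub>m k) $$ (i, j) = (\<Sum>l<N. d l ^ k * (\<phi> l $ i * cnj (\<phi> l $ j)))" for k
    using mat_entry_expansion[of "M ^\<^sub>m k", OF _ i j] M carrier eigen i
    by (auto simp: power_mat_mult_vec_eigen[OF M] intro!: sum.cong)
  have "mat_exp M $$ (i, j) = (\<Sum>k. \<Sum>l<N. d l ^ k * (\<phi> l $ i * cnj (\<phi> l $ j)) / of_nat (fact k))"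
    using M i j unfolding mat_exp_def by (simp add: power_entry sum_divide_distrib)
  also have "\<dots> = (\<Sum>l<N. \<Sum>k. d l ^ k * (\<phi> l $ i * cnj (\<phi> l $ j)) / of_nat (fact k))"
    by (rule suminf_sum, rule sums_summable, rule exp_series_mult_sums)
  also have "\<dots> = (\<Sum>l<N. exp (d l) * (\<phi> l $ i * cnj (\<phi> l $ j)))"
    by (rule sum.cong[OF refl], rule sums_unique[symmetric], rule exp_series_mult_sums)
  finally show ?thesis .
qed

lemma mat_exp_mult_vec_expansion:
  assumes M: "M \<in> carrier_mat N N" and eigen: "\<forall>l<N. M *\<^sub>v \<phi> l = d l \<cdot>\<^sub>v \<phi> l"
    and v: "v \<in> carrier_vec N" and i: "i < N"
  shows "(mat_exp M *\<^sub>v v) $ i = (\<Sum>l<N. exp (d l) * braket (\<phi> l) v * \<phi> l $ i)"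
proof -
  have exp_M: "mat_exp M \<in> carrier_mat N N" using M unfolding mat_exp_def by auto
  have "(mat_exp M *\<^sub>v v) $ i = (\<Sum>j<N. mat_exp M $$ (i, j) * v $ j)"
    using exp_M v i by (auto simp: scalar_prod_def atLeast0LessThan intro!: sum.cong)
  also have "\<dots> = (\<Sum>j<N. \<Sum>l<N. exp (d l) * \<phi> l $ i * (v $ j * cnj (\<phi> l $ j)))"
    using i by (auto simp: mat_exp_entry_eigen[OF M eigen] sum_distrib_left mult_ac intro!: sum.cong)
  also have "\<dots> = (\<Sum>l<N. exp (d l) * \<phi> l $ i * (\<Sum>j<N. v $ j * cnj (\<phi> l $ j)))"
    by (subst sum.swap) (simp add: sum_distrib_left)
  also have "\<dots> = (\<Sum>l<N. exp (d l) * braket (\<phi> l) v * \<phi> l $ i)"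
    using carrier v by (auto simp: braket_sum[of _ N] mult_ac intro!: sum.cong)
  finally show ?thesis .
qed

lemma filtered_state_energy:
  fixes H M :: "complex mat" and E d :: "nat \<Rightarrow> real"
  assumes H: "H \<in> carrier_mat N N" and H_eigen: "\<forall>l<N. H *\<^sub>v \<phi> l = complex_of_real (E l) \<cdot>\<^sub>v \<phi> l"
    and M: "M \<in> carrier_mat N N" and M_eigen: "\<forall>l<N. M *\<^sub>v \<phi> l = complex_of_real (d l) \<cdot>\<^sub>v \<phi> l"
    and v: "v \<in> carrier_vec N"
  defines "\<chi> \<equiv> mat_exp M *\<^sub>v v"
    and "w \<equiv> \<lambda>l. (exp (d l))\<^sup>2 * (cmod (braket (\<phi> l) v))\<^sup>2"
  shows "Re (braket \<chi> (H *\<^sub>v \<chi>) / braket \<chi> \<chi>) = (\<Sum>l<N. w l * E l) / (\<Sum>l<N. w l)"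
proof -
  define a where "a l = complex_of_real (exp (d l)) * braket (\<phi> l) v" for l
  have exp_M: "mat_exp M \<in> carrier_mat N N" using M unfolding mat_exp_def by auto
  have \<chi>: "\<chi> \<in> carrier_vec N" unfolding \<chi>_def using exp_M v by simp
  have \<chi>_exp: "\<forall>i<N. \<chi> $ i = (\<Sum>l<N. a l * \<phi> l $ i)"
    using mat_exp_mult_vec_expansion[OF M M_eigen v] unfolding \<chi>_def a_def by (simp add: exp_of_real)
  have H\<chi>_exp: "\<forall>i<N. (H *\<^sub>v \<chi>) $ i = (\<Sum>l<N. (a l * complex_of_real (E l)) * \<phi> l $ i)"
    using mat_mult_vec_expansion_eigen[OF H H_eigen \<chi> \<chi>_exp] by simp
  have a_norm: "a l * cnj (a l) = complex_of_real (w l)" for l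
  proof -
    have "a l * cnj (a l) = complex_of_real ((exp (d l))\<^sup>2) * (braket (\<phi> l) v * cnj (braket (\<phi> l) v))"
      unfolding a_def by (simp add: power2_eq_square mult_ac)
    then show ?thesis unfolding w_def of_real_mult complex_norm_square by simp
  qed
  have norm: "braket \<chi> \<chi> = complex_of_real (\<Sum>l<N. w l)"
    using braket_expansion[OF \<chi> \<chi> \<chi>_exp \<chi>_exp] by (simp add: a_norm)
  have "braket \<chi> (H *\<^sub>v \<chi>) = (\<Sum>l<N. (a l * complex_of_real (E l)) * cnj (a l))"
    using H \<chi> by (intro braket_expansion[OF \<chi> _ \<chi>_exp H\<chi>_exp]) simp
  also have "\<dots> = complex_of_real (\<Sum>l<N. w l * E l)"
    unfolding of_real_sum by (rule sum.cong[OF refl]) (simp add: a_norm[symmetric] mult_ac)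
  finally show ?thesis unfolding norm by (simp flip: of_real_divide)
qed

lemma gaussian_filtered_energy:
  fixes H :: "complex mat" and E :: "nat \<Rightarrow> real" and c \<tau> :: real
  assumes H: "H \<in> carrier_mat N N" and H_eigen: "\<forall>l<N. H *\<^sub>v \<phi> l = complex_of_real (E l) \<cdot>\<^sub>v \<phi> l"
    and v: "v \<in> carrier_vec N"
  defines "A \<equiv> H - complex_of_real c \<cdot>\<^sub>m 1\<^sub>m N"
    and "w \<equiv> \<lambda>l. exp (- ((E l - c)\<^sup>2 * \<tau>\<^sup>2)) * (cmod (braket (\<phi> l) v))\<^sup>2"
  defines "\<chi> \<equiv> mat_exp (complex_of_real (- (1/2) * \<tau>\<^sup>2) \<cdot>\<^sub>m (A * A)) *\<^sub>v v"
  shows "Re (braket \<chi> (H *\<^sub>v \<chi>) / braket \<chi> \<chi>) = (\<Sum>l<N. w l * E l) / (\<Sum>l<N. w l)"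
proof -
  define M where "M = complex_of_real (- (1/2) * \<tau>\<^sup>2) \<cdot>\<^sub>m (A * A)"
  define d where "d l = - (1/2) * \<tau>\<^sup>2 * (E l - c)\<^sup>2" for l
  have "A \<in> carrier_mat N N" unfolding A_def by (rule minus_carrier_mat) simp
  then have M: "M \<in> carrier_mat N N" unfolding M_def by simp
  have M_eigen: "\<forall>l<N. M *\<^sub>v \<phi> l = complex_of_real (d l) \<cdot>\<^sub>v \<phi> l"
  proof (intro allI impI)
    fix l assume "l < N"
    then have "\<phi> l \<in> carrier_vec N" "H *\<^sub>v \<phi> l = complex_of_real (E l) \<cdot>\<^sub>v \<phi> l"
      using carrier H_eigen by auto
    from gaussian_filter_eigen[OF H this]
    show "M *\<^sub>v \<phi> l = complex_of_real (d l) \<cdot>\<^sub>v \<phi> l" unfolding M_def A_def d_def .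
  qed
  have "(exp (d l))\<^sup>2 = exp (- ((E l - c)\<^sup>2 * \<tau>\<^sup>2))" for l
    unfolding d_def by (simp add: power2_eq_square flip: exp_add)
  then show ?thesis
    using filtered_state_energy[OF H H_eigen M M_eigen v] unfolding \<chi>_def M_def w_def by simp
qed

end

lemma mult_exp_neg_two_mult_le:
  fixes u v :: real
  assumes v: "1/2 \<le> v" and uv: "v \<le> u \<or> v = 1/2"
  shows "u * exp (- (2 * u)) \<le> v * exp (- (2 * v))"
proof -
  have v_pos: "0 < v" using v by simp
  have "u / v \<le> exp (2 * (u - v))"
  proof (cases "v \<le> u")
    case True
    have "u / v \<le> exp (u / v - 1)" using exp_ge_add_one_self[of "u / v - 1"] by simp
    also have "u / v - 1 = (u - v) * (1 / v)" using v_pos by (simp add: field_simps)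
    also have "(u - v) * (1 / v) \<le> (u - v) * 2"
      using True v v_pos by (intro mult_left_mono) (auto simp: field_simps)
    finally show ?thesis by (simp add: mult.commute)
  next
    case False
    then have v_half: "v = 1/2" using uv by simp
    have "2 * u \<le> exp (2 * u - 1)" using exp_ge_add_one_self[of "2 * u - 1"] by simp
    then show ?thesis by (simp add: v_half)
  qed
  then have "u \<le> v * exp (2 * (u - v))" using v_pos by (simp add: field_simps)
  then have "u * exp (- (2 * u)) \<le> v * exp (2 * (u - v)) * exp (- (2 * u))" by (simp add: mult_right_mono)
  also have "\<dots> = v * exp (- (2 * v))" by (simp add: mult.assoc flip: exp_add)
  finally show ?thesis .
qed

lemma mult_exp_neg_square_le_max:
  fixes y D \<tau> :: real
  assumes D: "D \<le> y" and \<tau>: "0 < \<tau>"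
  defines "Dt \<equiv> max D (1 / (sqrt 2 * \<tau>))"
  shows "y * exp (- (y\<^sup>2 * \<tau>\<^sup>2)) \<le> Dt * exp (- (Dt\<^sup>2 * \<tau>\<^sup>2))"
proof -
  define u where "u = y\<^sup>2 * \<tau>\<^sup>2"
  define v where "v = Dt\<^sup>2 * \<tau>\<^sup>2"
  have threshold: "(1 / (sqrt 2 * \<tau>))\<^sup>2 * \<tau>\<^sup>2 = 1/2" using \<tau> by (simp add: power_mult_distrib field_simps)
  have "1 / (sqrt 2 * \<tau>) \<le> Dt" unfolding Dt_def by simp
  moreover have "0 < 1 / (sqrt 2 * \<tau>)" using \<tau> by simp
  ultimately have Dt: "1 / (sqrt 2 * \<tau>) \<le> Dt" "0 \<le> Dt" by linarith+
  have "(1 / (sqrt 2 * \<tau>))\<^sup>2 \<le> Dt\<^sup>2" using Dt \<tau> by (intro power_mono) auto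
  then have v: "1/2 \<le> v" unfolding v_def using threshold by (metis mult_right_mono zero_le_power2)
  have uv: "v \<le> u \<or> v = 1/2"
  proof (cases "Dt \<le> y")
    case True
    then have "Dt\<^sup>2 \<le> y\<^sup>2" using Dt by (intro power_mono) auto
    then show ?thesis unfolding u_def v_def by (simp add: mult_right_mono)
  next
    case False
    then have "Dt = 1 / (sqrt 2 * \<tau>)" using D unfolding Dt_def by auto
    then show ?thesis unfolding v_def using threshold by simp
  qed
  have exp_double: "exp (- (2 * t)) = (exp (- t))\<^sup>2" for t :: real
    by (simp add: power2_eq_square flip: exp_add)
  from mult_exp_neg_two_mult_le[OF v uv]
  have "u * (exp (- u))\<^sup>2 \<le> v * (exp (- v))\<^sup>2" unfolding exp_double .
  moreover have "(y * exp (- u))\<^sup>2 * \<tau>\<^sup>2 = u * (exp (- u))\<^sup>2"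
    and "(Dt * exp (- v))\<^sup>2 * \<tau>\<^sup>2 = v * (exp (- v))\<^sup>2"
    unfolding u_def v_def by (simp_all only: power_mult_distrib mult_ac)
  ultimately have "(y * exp (- u))\<^sup>2 * \<tau>\<^sup>2 \<le> (Dt * exp (- v))\<^sup>2 * \<tau>\<^sup>2" by linarith
  then have "(y * exp (- u))\<^sup>2 \<le> (Dt * exp (- v))\<^sup>2" using \<tau> by simp
  then have "y * exp (- u) \<le> Dt * exp (- v)" by (rule power2_le_imp_le) (use Dt in simp)
  then show ?thesis unfolding u_def v_def .
qed

lemma gaussian_weighted_mean_bound:
  fixes q E :: "nat \<Rightarrow> real" and D \<tau> :: real
  assumes q_nonneg: "\<forall>l<N. 0 \<le> q l" and q_sum: "(\<Sum>l<N. q l) = 1" and q0: "0 < q 0"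
    and N: "0 < N" and gap: "\<forall>l<N. l \<noteq> 0 \<longrightarrow> E 0 + D \<le> E l" and \<tau>: "0 < \<tau>"
  defines "w \<equiv> \<lambda>l. exp (- ((E l - E 0)\<^sup>2 * \<tau>\<^sup>2))" and "Dt \<equiv> max D (1 / (sqrt 2 * \<tau>))"
  shows "(\<Sum>l<N. w l * q l * E l) / (\<Sum>l<N. w l * q l) - E 0
    \<le> (1 - q 0) / q 0 * exp (- (Dt\<^sup>2 * \<tau>\<^sup>2)) * Dt"
proof -
  define B where "B = Dt * exp (- (Dt\<^sup>2 * \<tau>\<^sup>2))"
  define R where "R = {..<N} - {0}"
  have split: "(\<Sum>l<N. f l) = f 0 + (\<Sum>l\<in>R. f l)" for f :: "nat \<Rightarrow> real"
    unfolding R_def using N by (simp add: sum.remove)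
  have excited: "l < N" "E 0 + D \<le> E l" if "l \<in> R" for l
    using that gap unfolding R_def by auto
  define S where "S = (\<Sum>l<N. w l * q l)"
  define T where "T = (\<Sum>l\<in>R. w l * q l * (E l - E 0))"
  have "q 0 \<le> S"
    unfolding S_def split[of "\<lambda>l. w l * q l"] using q_nonneg excited
    by (auto simp: w_def intro!: sum_nonneg)
  then have S: "0 < S" "q 0 \<le> S" using q0 by auto
  have "(\<Sum>l<N. w l * q l * E l) - E 0 * S = (\<Sum>l<N. w l * q l * (E l - E 0))"
    unfolding S_def by (simp add: sum_distrib_left sum_subtractf[symmetric] algebra_simps)
  also have "\<dots> = T" unfolding T_def by (simp add: split)
  finally have mean: "(\<Sum>l<N. w l * q l * E l) / S - E 0 = T / S" using S by (simp add: field_simps)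
  have "T \<le> (\<Sum>l\<in>R. q l * B)"
    unfolding T_def
  proof (rule sum_mono)
    fix l assume "l \<in> R"
    then have "w l * (E l - E 0) \<le> B" "0 \<le> q l"
      using mult_exp_neg_square_le_max[of D "E l - E 0" \<tau>] excited[of l] q_nonneg \<tau>
      by (auto simp: w_def B_def Dt_def mult.commute)
    then show "w l * q l * (E l - E 0) \<le> q l * B" by (metis mult.commute mult.left_commute mult_left_mono)
  qed
  also have "\<dots> = (1 - q 0) * B"
    using q_sum split[of q] by (simp flip: sum_distrib_right)
  finally have T_le: "T \<le> (1 - q 0) * B" .
  have "0 \<le> (\<Sum>l\<in>R. q l)" using q_nonneg excited by (auto intro: sum_nonneg)
  then have "0 \<le> (1 - q 0) * B"
    using q_sum split[of q] \<tau> unfolding B_def Dt_def by (simp add: max.coboundedI2)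
  have "T / S \<le> (1 - q 0) * B / S" using T_le S by (simp add: divide_right_mono)
  also have "\<dots> \<le> (1 - q 0) * B / q 0" using \<open>0 \<le> (1 - q 0) * B\<close> S q0 by (simp add: divide_left_mono)
  finally show ?thesis using mean unfolding S_def B_def by (simp add: mult_ac)
qed

theorem lemma1:
  fixes n :: nat and H :: "complex mat" and E :: "nat \<Rightarrow> real"
    and \<phi> :: "nat \<Rightarrow> complex vec" and \<Psi>0 :: "complex vec" and \<tau> :: real
  assumes n_pos: "n \<ge> 1"
    and H_carrier: "H \<in> carrier_mat (2^n) (2^n)"
    and H_herm: "mat_adjoint H = H"
    and \<phi>_carrier: "\<forall>l < 2^n. \<phi> l \<in> carrier_vec (2^n)"
    and \<phi>_orthonormal: "\<forall>l < 2^n. \<forall>m < 2^n. braket (\<phi> l) (\<phi> m) = (if l = m then 1 else 0)"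
    and \<phi>_eigen: "\<forall>l < 2^n. H *\<^sub>v \<phi> l = complex_of_real (E l) \<cdot>\<^sub>v \<phi> l"
    and E_sorted: "\<forall>l m. l \<le> m \<longrightarrow> m < 2^n \<longrightarrow> E l \<le> E m"
    and \<Psi>0_carrier: "\<Psi>0 \<in> carrier_vec (2^n)"
    and \<Psi>0_norm: "braket \<Psi>0 \<Psi>0 = 1"
    and pg_pos: "(cmod (braket (\<phi> 0) \<Psi>0))^2 > 0"
    and \<tau>_pos: "\<tau> > 0"
  shows
    "let Eg = E 0; \<Delta> = E 1 - E 0; pg = (cmod (braket (\<phi> 0) \<Psi>0))^2;
         A = H - complex_of_real Eg \<cdot>\<^sub>m 1\<^sub>m (2^n);
         \<chi> = mat_exp (complex_of_real (- (1/2) * \<tau>^2) \<cdot>\<^sub>m (A * A)) *\<^sub>v \<Psi>0;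
         Et = Re (braket \<chi> (H *\<^sub>v \<chi>) / braket \<chi> \<chi>);
         \<Delta>t = max \<Delta> (1 / (sqrt 2 * \<tau>))
     in Et - Eg \<le> (1 - pg) / pg * exp (- (\<Delta>t^2 * \<tau>^2)) * \<Delta>t"
proof -
  interpret orthonormal_basis "2^n" \<phi> using \<phi>_carrier \<phi>_orthonormal by unfold_locales
  define p where "p l = (cmod (braket (\<phi> l) \<Psi>0))\<^sup>2" for l
  have "complex_of_real (\<Sum>l<2^n. p l) = 1"
    using braket_self_expansion[OF \<Psi>0_carrier] \<Psi>0_norm unfolding p_def by simp
  then have p_sum: "(\<Sum>l<2^n. p l) = 1" by (metis of_real_eq_1_iff)
  have "(\<Sum>l<2^n. exp (- ((E l - E 0)\<^sup>2 * \<tau>\<^sup>2)) * p l * E l) / (\<Sum>l<2^n. exp (- ((E l - E 0)\<^sup>2 * \<tau>\<^sup>2)) * p l)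
      - E 0 \<le> (1 - p 0) / p 0 * exp (- ((max (E 1 - E 0) (1 / (sqrt 2 * \<tau>)))\<^sup>2 * \<tau>\<^sup>2))
          * max (E 1 - E 0) (1 / (sqrt 2 * \<tau>))"
    using E_sorted pg_pos \<tau>_pos
    by (intro gaussian_weighted_mean_bound p_sum) (auto simp: p_def)
  then show ?thesis
    using gaussian_filtered_energy[OF H_carrier \<phi>_eigen \<Psi>0_carrier, where c = "E 0" and \<tau> = \<tau>]
    unfolding Let_def p_def by simp
qed

end
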